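(* Let $\mathcal{P}=\{G^{\rm z},c^{\rm z},A^{\rm z},b^{\rm z}\}\subset\mathbb{R}^n$ be a nonempty constrained zonotope, and let $\mathcal{C}=\{G^{\rm c},c^{\rm c}\}=\{G^{\rm c}\xi+c^{\rm c}:\xi\in[-1,1]^n\}\subset\mathbb{R}^n$, with $G^{\rm c}\in\mathbb{R}^{n\times n}$ and $c^{\rm c}\in\mathbb{R}^n$, be a parallelotope with $\mathcal{P}\subseteq\mathcal{C}$. For each $i=1,\ldots,n$ solve the linear programs $$\zeta^{\rm L}_i=\min_{\xi^{\rm c},\xi^{\rm z}}\Big\{\xi^{\rm c}_i:\ G^{\rm c}_{i,:}\xi^{\rm c}+c^{\rm c}_i=G^{\rm z}_{i,:}\xi^{\rm z}+c^{\rm z}_i,\ \xi^{\rm c}\in[-1,1]^n,\ \xi^{\rm z}\in\mathcal{B}(A^{\rm z},b^{\rm z})\Big\},$$ $$\zeta^{\rm U}_i=\max_{\xi^{\rm c},\xi^{\rm z}}\Big\{\xi^{\rm c}_i:\ G^{\rm c}_{i,:}\xi^{\rm c}+c^{\rm c}_i=G^{\rm z}_{i,:}\xi^{\rm z}+c^{\rm z}_i,\ \xi^{\rm c}\in[-1,1]^n,\ \xi^{\rm z}\in\mathcal{B}(A^{\rm z},b^{\rm z})\Big\}.$$ Define $\mathrm{rad}=\tfrac12(\zeta^{\rm U}-\zeta^{\rm L})\in\mathbb{R}^n$, $\mathrm{mid}=\tfrac12(\zeta^{\rm L}+\zeta^{\rm U})\in\mathbb{R}^n$, and the zonotope $$\mathcal{T}=\{G^{\rm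 c}\,\mathrm{diag}(\mathrm{rad}),\ c^{\rm c}+G^{\rm c}\,\mathrm{mid}\}=\{G^{\rm c}\,\mathrm{diag}(\mathrm{rad})\xi+c^{\rm c}+G^{\rm c}\,\mathrm{mid}:\xi\in[-1,1]^n\}.$$ Then $\mathcal{T}$ is a parallelotope with $\mathcal{T}\supseteq\mathcal{P}$ (the paper calls $\mathcal{T}$ the optimal parallelotope obtained in this way).
   Context: A constrained zonotope (CZ) with generator matrix $G\in\mathbb{R}^{n\times n_g}$, center $c\in\mathbb{R}^n$, and constraints $A\in\mathbb{R}^{n_h\times n_g}$, $b\in\mathbb{R}^{n_h}$ is the set $\{G,c,A,b\}=\{G\xi+c:\xi\in\mathcal{B}(A,b)\}$, where $\mathcal{B}(A,b)=\{\xi\in[-1,1]^{n_g}:A\xi=b\}$. A zonotope $\{G,c\}$ is a CZ without equality constraints. $M_{i,:}$ denotes the $i$th row of a matrix $M$, and $\mathrm{diag}(v)$ the diagonal matrix with diagonal $v$. *)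

theory Defs
  imports "HOL-Analysis.Analysis"
begin

definition unit_box :: "(real ^ 'k) set" where
  "unit_box = {\<xi>. \<forall>j. \<bar>\<xi> $ j\<bar> \<le> 1}"

definition Bset :: "real ^ 'g ^ 'h \<Rightarrow> real ^ 'h \<Rightarrow> (real ^ 'g) set" where
  "Bset A b = {\<xi> \<in> unit_box. A *v \<xi> = b}"

definition CZ :: "real ^ 'g ^ 'n \<Rightarrow> real ^ 'n \<Rightarrow> real ^ 'g ^ 'h \<Rightarrow> real ^ 'h \<Rightarrow> (real ^ 'n) set" where
  "CZ G c A b = {G *v \<xi> + c | \<xi>. \<xi> \<in> Bset A b}"

definition zonotope :: "real ^ 'g ^ 'n \<Rightarrow> real ^ 'n \<Rightarrow> (real ^ 'n) set" where
  "zonotope G c = {G *v \<xi> + c | \<xi>. \<xi> \<in> unit_box}"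

definition parallelotope :: "(real ^ 'n) set \<Rightarrow> bool" where
  "parallelotope S \<longleftrightarrow> (\<exists>(G :: real ^ 'n ^ 'n) c. S = zonotope G c)"

definition diag_mat :: "real ^ 'n \<Rightarrow> real ^ 'n ^ 'n" where
  "diag_mat v = (\<chi> i j. if i = j then v $ i else 0)"

definition LP_values :: "real ^ 'n ^ 'n \<Rightarrow> real ^ 'n \<Rightarrow> real ^ 'g ^ 'n \<Rightarrow> real ^ 'n
    \<Rightarrow> real ^ 'g ^ 'h \<Rightarrow> real ^ 'h \<Rightarrow> 'n \<Rightarrow> real set" where
  "LP_values Gc cc Gz cz A b i =
     {\<xi>c $ i | \<xi>c \<xi>z. (Gc $ i) \<bullet> \<xi>c + cc $ i = (Gz $ i) \<bullet> \<xi>z + cz $ i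
                      \<and> \<xi>c \<in> unit_box \<and> \<xi>z \<in> Bset A b}"

definition zetaL where "zetaL Gc cc Gz cz A b = (\<chi> i. Inf (LP_values Gc cc Gz cz A b i))"
definition zetaU where "zetaU Gc cc Gz cz A b = (\<chi> i. Sup (LP_values Gc cc Gz cz A b i))"

end

theory Submission
  imports Defs
begin

text \<open>A point x of P has coefficients \<xi>c \<in> [-1,1]^n with x = Gc \<xi>c + cc, since P is
  contained in C, and coefficients \<xi>z \<in> B(Az,bz) with x = Gz \<xi>z + cz. The pair (\<xi>c,\<xi>z) is
  feasible for every one of the linear programs, so \<xi>c lies in the box [\<zeta>L,\<zeta>U]. That box lies in the
  zonotope {diag(rad), mid}, and T is its image under the affine map y \<mapsto> Gc y + cc.\<close>

lemma diag_mat_mult_vec: "diag_mat r *v v = (\<chi> j. r $ j * v $ j)"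
  unfolding diag_mat_def matrix_vector_mult_def
  by (simp add: vec_eq_iff if_distrib[where f="\<lambda>a. a * _"] cong: if_cong)

lemma zonotope_matrix_mult:
  "zonotope (G ** M) (c + G *v m) = (\<lambda>y. G *v y + c) ` zonotope M m"
proof -
  have "(G ** M) *v \<xi> + (c + G *v m) = G *v (M *v \<xi> + m) + c" for \<xi>
    by (simp add: matrix_vector_mul_assoc[symmetric] matrix_vector_right_distrib algebra_simps)
  then show ?thesis
    unfolding zonotope_def by auto
qed

lemma interval_midpoint_radius:
  fixes l u x :: real
  assumes "l \<le> x" "x \<le> u"
  shows "\<exists>e. \<bar>e\<bar> \<le> 1 \<and> x = (u - l) / 2 * e + (l + u) / 2"
proof (cases "l = u")
  case True
  then show ?thesis using assms by (intro exI[of _ 0]) simp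
next
  case False
  then have "l < u" using assms by simp
  then show ?thesis
    using assms by (intro exI[of _ "(2 * x - l - u) / (u - l)"]) (auto simp: field_simps)
qed

lemma cbox_subset_zonotope_diag_mat:
  fixes l u :: "real ^ 'n"
  shows "cbox l u \<subseteq> zonotope (diag_mat ((1/2) *\<^sub>R (u - l))) ((1/2) *\<^sub>R (l + u))"
proof
  fix x assume "x \<in> cbox l u"
  then have "\<forall>j. \<exists>e. \<bar>e\<bar> \<le> 1 \<and> x $ j = (u $ j - l $ j) / 2 * e + (l $ j + u $ j) / 2"
    using interval_midpoint_radius by (simp add: mem_box_cart)
  then obtain e where e: "\<And>j. \<bar>e j\<bar> \<le> 1 \<and> x $ j = (u $ j - l $ j) / 2 * e j + (l $ j + u $ j) / 2"
    by metis
  have "(\<chi> j. e j) \<in> unit_box"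
    using e by (simp add: unit_box_def)
  moreover have "x = diag_mat ((1/2) *\<^sub>R (u - l)) *v (\<chi> j. e j) + (1/2) *\<^sub>R (l + u)"
    using e by (simp add: diag_mat_mult_vec vec_eq_iff)
  ultimately show "x \<in> zonotope (diag_mat ((1/2) *\<^sub>R (u - l))) ((1/2) *\<^sub>R (l + u))"
    unfolding zonotope_def by blast
qed

lemma LP_values_subset: "LP_values Gc cc Gz cz A b i \<subseteq> {-1..1}"
  unfolding LP_values_def unit_box_def by (auto simp: abs_le_iff)

lemma feasible_in_cbox_zeta:
  assumes "\<xi>c \<in> unit_box" "\<xi>z \<in> Bset A b" "Gc *v \<xi>c + cc = Gz *v \<xi>z + cz"
  shows "\<xi>c \<in> cbox (zetaL Gc cc Gz cz A b) (zetaU Gc cc Gz cz A b)"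
  unfolding mem_box_cart zetaL_def zetaU_def
proof (intro allI)
  fix i
  have "(Gc $ i) \<bullet> \<xi>c + cc $ i = (Gz $ i) \<bullet> \<xi>z + cz $ i"
    using arg_cong[where f="\<lambda>v. v $ i", OF assms(3)]
    by (simp add: matrix_vector_mult_def inner_vec_def mult.commute)
  then have mem: "\<xi>c $ i \<in> LP_values Gc cc Gz cz A b i"
    unfolding LP_values_def using assms(1,2) by blast
  have "bdd_below (LP_values Gc cc Gz cz A b i)" "bdd_above (LP_values Gc cc Gz cz A b i)"
    using LP_values_subset by (meson bdd_below_Icc bdd_above_Icc bdd_below_mono bdd_above_mono)+
  then show "(\<chi> i. Inf (LP_values Gc cc Gz cz A b i)) $ i \<le> \<xi>c $ i
      \<and> \<xi>c $ i \<le> (\<chi> i. Sup (LP_values Gc cc Gz cz A b i)) $ i"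
    using cInf_lower[OF mem] cSup_upper[OF mem] by simp
qed

theorem proposition3:
  fixes Gz :: "real ^ 'g ^ 'n" and cz :: "real ^ 'n"
    and Az :: "real ^ 'g ^ 'h" and bz :: "real ^ 'h"
    and Gc :: "real ^ 'n ^ 'n" and cc :: "real ^ 'n"
  assumes "CZ Gz cz Az bz \<noteq> {}"
    and "CZ Gz cz Az bz \<subseteq> zonotope Gc cc"
  defines "zL \<equiv> zetaL Gc cc Gz cz Az bz"
    and "zU \<equiv> zetaU Gc cc Gz cz Az bz"
  defines "rad \<equiv> (1/2) *\<^sub>R (zU - zL)"
    and "mid \<equiv> (1/2) *\<^sub>R (zL + zU)"
  defines "T \<equiv> zonotope (Gc ** diag_mat rad) (cc + Gc *v mid)"
  shows "parallelotope T \<and> CZ Gz cz Az bz \<subseteq> T"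
proof
  show "parallelotope T" unfolding T_def parallelotope_def by blast
next
  \<comment> \<open>Nonemptiness of P is not needed: for empty P the LP values are empty, zL and zU are
    junk, and the inclusion is trivial.\<close>
  show "CZ Gz cz Az bz \<subseteq> T"
  proof
    fix x assume xP: "x \<in> CZ Gz cz Az bz"
    then obtain \<xi>z where xz: "x = Gz *v \<xi>z + cz" and \<xi>z: "\<xi>z \<in> Bset Az bz"
      unfolding CZ_def by blast
    from xP assms(2) obtain \<xi>c where xc: "x = Gc *v \<xi>c + cc" and \<xi>c: "\<xi>c \<in> unit_box"
      unfolding zonotope_def by blast
    have "\<xi>c \<in> cbox zL zU"
      unfolding zL_def zU_def using feasible_in_cbox_zeta[OF \<xi>c \<xi>z] xc xz by simp
    then have "\<xi>c \<in> zonotope (diag_mat rad) mid"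
      using cbox_subset_zonotope_diag_mat unfolding rad_def mid_def by blast
    then show "x \<in> T"
      unfolding T_def zonotope_matrix_mult using xc by blast
  qed
qed

end
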